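(* Let $A\in\mathbb{R}^{N\times N}$, $B\in\mathbb{R}^{N\times m}$, $C\in\mathbb{R}^{p\times N}$, $D\in\mathbb{R}^{p\times m}$ with all eigenvalues of $A$ having negative real part. Let $\mathcal{W}:=L^2(-\infty,0;\mathbb{R}^m)$, $\mathcal{Y}:=L^2(0,\infty;\mathbb{R}^p)$ with standard inner products, and let $\mathcal{H}\colon\mathcal{W}\to\mathcal{Y}$, $(\mathcal{H}u)(t)=\int_{-\infty}^0 h(t-s)u(s)\,\mathrm{d}s$ with $h(t)=Ce^{tA}B+D\delta(t)$, have singular value decomposition $\mathcal{H}=\sum_{i=1}^N\sigma_i\langle\cdot,f_i\rangle_{\mathcal{W}}\,g_i$ with orthonormal $\{f_i\}\subset\mathcal{W}$, orthonormal $\{g_i\}\subset\mathcal{Y}$, $\sigma_1\ge\dots\ge\sigma_N\ge0$ (and $\sigma_{N+1}:=0$). Let $\mathbb{W}$ be the closed unit ball of $\mathcal{W}$. Then for $n=1,\dots,N$, the subspace $\widehat{\mathcal{W}}_n=\operatorname{span}\{f_1,\dots,f_n\}$ is an $n$-dimensional active subspace of $\mathcal{H}$ on $\mathbb{W}$, and the corresponding worst-case error is $$\sup_{w\in\mathbb{W}}\|\mathcal{H}(w)-\mathcal{H}(\pi_{\widehat{\mathcal{W}}_n}w)\|_{\mathcal{Y}}=\inf_{\mathcal{W}_n\le\mathcal{W},\,\dim\mathcal{W}_n\le n}\ \sup_{w\in\mathbb{W}}\|\mathcal{H}(w)-\mathcal{H}(\pi_{\mathcal{W}_n}w)\|_{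\mathcal{Y}}=\sigma_{n+1}.$$
   Context: An $n$-dimensional subspace $\widehat{\mathcal{W}}_n\le\mathcal{W}$ is called an active subspace of an operator $\mathcal{S}\colon\mathcal{W}\to\mathcal{Y}$ on a set $\mathbb{W}\subseteq\mathcal{W}$ if $\sup_{w\in\mathbb{W}}\|\mathcal{S}(w)-\mathcal{S}(\pi_{\widehat{\mathcal{W}}_n}w)\|=\inf_{\mathcal{W}_n\le\mathcal{W},\,\dim\mathcal{W}_n\le n}\sup_{w\in\mathbb{W}}\|\mathcal{S}(w)-\mathcal{S}(\pi_{\mathcal{W}_n}w)\|$, where $\pi_{\mathcal{W}_n}$ denotes the orthogonal projection onto $\mathcal{W}_n$. *)

theory Defs
  imports "HOL-Analysis.Analysis"
begin

fun matpow :: "real^'n^'n \<Rightarrow> nat \<Rightarrow> real^'n^'n" where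
  "matpow M 0 = mat 1"
| "matpow M (Suc k) = M ** matpow M k"

definition mat_exp :: "real^'n^'n \<Rightarrow> real^'n^'n" where
  "mat_exp M = (\<Sum>k. (1 / fact k) *\<^sub>R matpow M k)"

definition complex_eigenvalue :: "real^'n^'n \<Rightarrow> complex \<Rightarrow> bool" where
  "complex_eigenvalue A l \<longleftrightarrow>
     (\<exists>v :: complex^'n. v \<noteq> 0 \<and>
        (\<chi> i j. complex_of_real (A $ i $ j)) *v v = l *s v)"

definition L2 :: "real set \<Rightarrow> (real \<Rightarrow> 'a::euclidean_space) set" where
  "L2 S = {u. set_borel_measurable lborel S u \<and>
              set_integrable lborel S (\<lambda>x. (norm (u x))\<^sup>2)}"

definition L2_inner :: "real set \<Rightarrow> (real \<Rightarrow> 'a::euclidean_space) \<Rightarrow> (real \<Rightarrow> 'a) \<Rightarrow> real" where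
  "L2_inner S u v = (LINT x:S|lborel. inner (u x) (v x))"

definition L2_norm :: "real set \<Rightarrow> (real \<Rightarrow> 'a::euclidean_space) \<Rightarrow> real" where
  "L2_norm S u = sqrt (L2_inner S u u)"

definition fspan :: "nat \<Rightarrow> (nat \<Rightarrow> real \<Rightarrow> 'a::euclidean_space) \<Rightarrow> (real \<Rightarrow> 'a) set" where
  "fspan n v = {(\<lambda>x. \<Sum>i<n. c i *\<^sub>R v i x) | c. True}"

definition L2_subspace_dim_le :: "real set \<Rightarrow> nat \<Rightarrow> (real \<Rightarrow> 'a::euclidean_space) set \<Rightarrow> bool" where
  "L2_subspace_dim_le S n V \<longleftrightarrow> (\<exists>v. (\<forall>i<n. v i \<in> L2 S) \<and> V = fspan n v)"

text \<open>Subspaces of L2(S) of dimension exactly n: spanned by n elements that are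
  linearly independent in L2(S) (i.e. modulo null functions).\<close>
definition L2_subspace_dim_eq :: "real set \<Rightarrow> nat \<Rightarrow> (real \<Rightarrow> 'a::euclidean_space) set \<Rightarrow> bool" where
  "L2_subspace_dim_eq S n V \<longleftrightarrow> (\<exists>v. (\<forall>i<n. v i \<in> L2 S) \<and> V = fspan n v \<and>
      (\<forall>c. L2_norm S (\<lambda>x. \<Sum>i<n. c i *\<^sub>R v i x) = 0 \<longrightarrow> (\<forall>i<n. c i = 0)))"

definition L2_proj :: "real set \<Rightarrow> (real \<Rightarrow> 'a::euclidean_space) set \<Rightarrow> (real \<Rightarrow> 'a) \<Rightarrow> (real \<Rightarrow> 'a)" where
  "L2_proj S V w = (SOME p. p \<in> V \<and> (\<forall>x\<in>V. L2_inner S (\<lambda>s. w s - p s) x = 0))"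

definition worst_err ::
  "real set \<Rightarrow> real set \<Rightarrow> ((real \<Rightarrow> 'a::euclidean_space) \<Rightarrow> (real \<Rightarrow> 'b::euclidean_space))
   \<Rightarrow> (real \<Rightarrow> 'a) set \<Rightarrow> (real \<Rightarrow> 'a) set \<Rightarrow> real" where
  "worst_err S T Op Wset V =
     (SUP w\<in>Wset. L2_norm T (\<lambda>t. Op w t - Op (L2_proj S V w) t))"

definition optimal_err ::
  "real set \<Rightarrow> real set \<Rightarrow> ((real \<Rightarrow> 'a::euclidean_space) \<Rightarrow> (real \<Rightarrow> 'b::euclidean_space))
   \<Rightarrow> (real \<Rightarrow> 'a) set \<Rightarrow> nat \<Rightarrow> real" where
  "optimal_err S T Op Wset n =
     (INF V\<in>{V. L2_subspace_dim_le S n V}. worst_err S T Op Wset V)"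

definition active_subspace ::
  "real set \<Rightarrow> real set \<Rightarrow> ((real \<Rightarrow> 'a::euclidean_space) \<Rightarrow> (real \<Rightarrow> 'b::euclidean_space))
   \<Rightarrow> (real \<Rightarrow> 'a) set \<Rightarrow> nat \<Rightarrow> (real \<Rightarrow> 'a) set \<Rightarrow> bool" where
  "active_subspace S T Op Wset n V \<longleftrightarrow>
     L2_subspace_dim_eq S n V \<and> worst_err S T Op Wset V = optimal_err S T Op Wset n"

text \<open>For t > 0 and s \<le> 0 one has t - s > 0, so the feedthrough term D \<delta>(t-s)
  does not contribute; the kernel is C e^{(t-s)A} B.\<close>
definition hankel ::
  "real^'N^'N \<Rightarrow> real^'m^'N \<Rightarrow> real^'N^'p \<Rightarrow> (real \<Rightarrow> real^'m) \<Rightarrow> (real \<Rightarrow> real^'p)" where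
  "hankel A B C u = (\<lambda>t. LINT s:{..0}|lborel. C *v (mat_exp ((t - s) *\<^sub>R A) *v (B *v u s)))"

end

theory Submission
  imports Defs
begin

(* Write r = w - \<pi>\<^sub>V w for the residual of an input w. By the singular value
  decomposition, the output error at w is sqrt (\<Sum>i \<sigma>\<^sub>i\<^sup>2 <r, f\<^sub>i>\<^sup>2).
  For V = span {f\<^sub>1, ..., f\<^sub>n} the residual is orthogonal to f\<^sub>1, ..., f\<^sub>n, so by
  Bessel's inequality the error is at most \<sigma>(n+1) ||r|| \<le> \<sigma>(n+1).
  Conversely, if V is spanned by n functions, solving n homogeneous linear equations in
  n + 1 unknowns gives a unit vector w in span {f\<^sub>1, ..., f(n+1)} orthogonal to V; its
  projection onto V is null, so the error at w is at least \<sigma>(n+1). *)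

section \<open>The inner product on L2\<close>

lemma L2_borel_measurable:
  "u \<in> L2 S \<Longrightarrow> (\<lambda>x. indicator S x *\<^sub>R u x) \<in> borel_measurable lborel"
  unfolding L2_def set_borel_measurable_def by auto

lemma L2_inner_integrable:
  assumes u: "u \<in> L2 S" and v: "v \<in> L2 S"
  shows "set_integrable lborel S (\<lambda>x. inner (u x) (v x))"
proof (rule set_integrable_bound[where f="\<lambda>x. (norm (u x))\<^sup>2 + (norm (v x))\<^sup>2"])
  show "set_integrable lborel S (\<lambda>x. (norm (u x))\<^sup>2 + (norm (v x))\<^sup>2)"
    using u v unfolding L2_def by auto
  have "(\<lambda>x. inner (indicator S x *\<^sub>R u x) (indicator S x *\<^sub>R v x)) \<in> borel_measurable lborel"
    using L2_borel_measurable[OF u] L2_borel_measurable[OF v] by measurable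
  moreover have "(\<lambda>x. inner (indicator S x *\<^sub>R u x) (indicator S x *\<^sub>R v x))
      = (\<lambda>x. indicator S x *\<^sub>R inner (u x) (v x))"
    by (auto simp: indicator_def)
  ultimately show "set_borel_measurable lborel S (\<lambda>x. inner (u x) (v x))"
    unfolding set_borel_measurable_def by simp
  show "AE x in lborel. x \<in> S \<longrightarrow>
      norm (inner (u x) (v x)) \<le> norm ((norm (u x))\<^sup>2 + (norm (v x))\<^sup>2)"
  proof (intro AE_I2 impI)
    fix x
    have "\<bar>inner (u x) (v x)\<bar> \<le> norm (u x) * norm (v x)" by (rule Cauchy_Schwarz_ineq2)
    also have "\<dots> \<le> (norm (u x))\<^sup>2 + (norm (v x))\<^sup>2"
      using sum_squares_bound[of "norm (u x)" "norm (v x)"]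
        mult_nonneg_nonneg[OF norm_ge_zero norm_ge_zero, of "u x" "v x"] by linarith
    finally show "norm (inner (u x) (v x)) \<le> norm ((norm (u x))\<^sup>2 + (norm (v x))\<^sup>2)" by simp
  qed
qed

lemma L2_zero: "(\<lambda>x. 0) \<in> L2 S"
  unfolding L2_def set_borel_measurable_def set_integrable_def by simp

lemma L2_scaleR:
  assumes "u \<in> L2 S" shows "(\<lambda>x. c *\<^sub>R u x) \<in> L2 S"
proof -
  have "(\<lambda>x. c *\<^sub>R (indicator S x *\<^sub>R u x)) \<in> borel_measurable lborel"
    using L2_borel_measurable[OF assms] by measurable
  then have "set_borel_measurable lborel S (\<lambda>x. c *\<^sub>R u x)"
    unfolding set_borel_measurable_def by (simp add: mult.commute)
  moreover have "set_integrable lborel S (\<lambda>x. c\<^sup>2 * (norm (u x))\<^sup>2)"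
    using assms unfolding L2_def by auto
  ultimately show ?thesis
    unfolding L2_def by (simp add: power_mult_distrib)
qed

lemma L2_add:
  assumes u: "u \<in> L2 S" and v: "v \<in> L2 S" shows "(\<lambda>x. u x + v x) \<in> L2 S"
proof -
  have "(\<lambda>x. indicator S x *\<^sub>R u x + indicator S x *\<^sub>R v x) \<in> borel_measurable lborel"
    using L2_borel_measurable[OF u] L2_borel_measurable[OF v] by measurable
  then have "set_borel_measurable lborel S (\<lambda>x. u x + v x)"
    unfolding set_borel_measurable_def by (simp add: scaleR_add_right)
  moreover have "set_integrable lborel S
      (\<lambda>x. inner (u x) (u x) + 2 * inner (u x) (v x) + inner (v x) (v x))"
    using L2_inner_integrable[OF u u] L2_inner_integrable[OF u v] L2_inner_integrable[OF v v]
    by (intro set_integral_add) auto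
  moreover have "(\<lambda>x. inner (u x) (u x) + 2 * inner (u x) (v x) + inner (v x) (v x))
      = (\<lambda>x. (norm (u x + v x))\<^sup>2)"
    by (simp add: fun_eq_iff power2_norm_eq_inner inner_add_left inner_add_right inner_commute)
  ultimately show ?thesis unfolding L2_def by simp
qed

lemma L2_diff: "u \<in> L2 S \<Longrightarrow> v \<in> L2 S \<Longrightarrow> (\<lambda>x. u x - v x) \<in> L2 S"
  using L2_add[OF _ L2_scaleR, of u S v "-1"] by simp

lemma L2_sum:
  "finite I \<Longrightarrow> (\<And>i. i \<in> I \<Longrightarrow> u i \<in> L2 S) \<Longrightarrow> (\<lambda>x. \<Sum>i\<in>I. c i *\<^sub>R u i x) \<in> L2 S"
  by (induction I rule: finite_induct) (simp_all add: L2_zero L2_add L2_scaleR)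

lemma fspan_member:
  assumes "k < n" shows "v k \<in> fspan n v"
proof -
  have "v k = (\<lambda>x. \<Sum>i<n. (if i = k then 1 else 0) *\<^sub>R v i x)"
    using assms by (simp add: if_distrib[of "\<lambda>c. c *\<^sub>R _"] sum.delta cong: if_cong)
  then show ?thesis unfolding fspan_def by (intro CollectI exI[of _ "\<lambda>i. if i = k then 1 else 0"]) simp
qed

lemma fspan_subset_L2: "\<forall>i<n. v i \<in> L2 S \<Longrightarrow> fspan n v \<subseteq> L2 S"
  unfolding fspan_def by (auto intro!: L2_sum)

lemma L2_inner_commute: "L2_inner S u v = L2_inner S v u"
  unfolding L2_inner_def by (simp add: inner_commute)

lemma L2_inner_nonneg: "0 \<le> L2_inner S u u"
  unfolding L2_inner_def set_lebesgue_integral_def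
  by (intro integral_nonneg_AE AE_I2) (simp add: indicator_def)

lemma L2_inner_add_left:
  "u \<in> L2 S \<Longrightarrow> v \<in> L2 S \<Longrightarrow> w \<in> L2 S \<Longrightarrow>
    L2_inner S (\<lambda>x. u x + v x) w = L2_inner S u w + L2_inner S v w"
  unfolding L2_inner_def inner_add_left by (simp add: L2_inner_integrable)

lemma L2_inner_diff_left:
  "u \<in> L2 S \<Longrightarrow> v \<in> L2 S \<Longrightarrow> w \<in> L2 S \<Longrightarrow>
    L2_inner S (\<lambda>x. u x - v x) w = L2_inner S u w - L2_inner S v w"
  unfolding L2_inner_def inner_diff_left by (simp add: L2_inner_integrable)

lemma L2_inner_scaleR_left: "L2_inner S (\<lambda>x. c *\<^sub>R u x) w = c * L2_inner S u w"
  unfolding L2_inner_def by simp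

lemma L2_inner_sum_left:
  assumes "finite I" "\<And>i. i \<in> I \<Longrightarrow> u i \<in> L2 S" "w \<in> L2 S"
  shows "L2_inner S (\<lambda>x. \<Sum>i\<in>I. c i *\<^sub>R u i x) w = (\<Sum>i\<in>I. c i * L2_inner S (u i) w)"
  using assms
proof (induction I rule: finite_induct)
  case empty
  then show ?case by (simp add: L2_inner_def)
next
  case (insert a I)
  then have "L2_inner S (\<lambda>x. c a *\<^sub>R u a x + (\<Sum>i\<in>I. c i *\<^sub>R u i x)) w
      = L2_inner S (\<lambda>x. c a *\<^sub>R u a x) w + L2_inner S (\<lambda>x. \<Sum>i\<in>I. c i *\<^sub>R u i x) w"
    by (intro L2_inner_add_left L2_scaleR L2_sum) auto
  with insert show ?case by (simp add: L2_inner_scaleR_left)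
qed

lemma L2_inner_add_right:
  "u \<in> L2 S \<Longrightarrow> v \<in> L2 S \<Longrightarrow> w \<in> L2 S \<Longrightarrow>
    L2_inner S w (\<lambda>x. u x + v x) = L2_inner S w u + L2_inner S w v"
  by (simp add: L2_inner_commute[of S w] L2_inner_add_left)

lemma L2_inner_diff_right:
  "u \<in> L2 S \<Longrightarrow> v \<in> L2 S \<Longrightarrow> w \<in> L2 S \<Longrightarrow>
    L2_inner S w (\<lambda>x. u x - v x) = L2_inner S w u - L2_inner S w v"
  by (simp add: L2_inner_commute[of S w] L2_inner_diff_left)

lemma L2_inner_scaleR_right: "L2_inner S w (\<lambda>x. c *\<^sub>R u x) = c * L2_inner S w u"
  by (simp add: L2_inner_commute[of S w] L2_inner_scaleR_left)

lemma L2_inner_sum_right: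
  "finite I \<Longrightarrow> (\<And>i. i \<in> I \<Longrightarrow> u i \<in> L2 S) \<Longrightarrow> w \<in> L2 S \<Longrightarrow>
    L2_inner S w (\<lambda>x. \<Sum>i\<in>I. c i *\<^sub>R u i x) = (\<Sum>i\<in>I. c i * L2_inner S w (u i))"
  by (simp add: L2_inner_commute[of S w] L2_inner_sum_left)

text \<open>Functions of norm zero are orthogonal to everything: otherwise
  \<open>\<langle>u + t v, u + t v\<rangle> = \<langle>u, u\<rangle> + 2 t \<langle>u, v\<rangle>\<close> would become negative for suitable \<open>t\<close>.\<close>

lemma L2_inner_null_right:
  assumes u: "u \<in> L2 S" and v: "v \<in> L2 S" and null: "L2_inner S v v = 0"
  shows "L2_inner S u v = 0"
proof (rule ccontr)
  assume uv: "L2_inner S u v \<noteq> 0"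
  define t where "t = - (L2_inner S u u + 1) / (2 * L2_inner S u v)"
  have "(\<lambda>x. u x + t *\<^sub>R v x) \<in> L2 S" using u v by (intro L2_add L2_scaleR)
  then have "0 \<le> L2_inner S (\<lambda>x. u x + t *\<^sub>R v x) (\<lambda>x. u x + t *\<^sub>R v x)"
    by (simp add: L2_inner_nonneg)
  also have "\<dots> = L2_inner S u u + t * L2_inner S u v + t * L2_inner S v u + t * t * L2_inner S v v"
    using u v by (simp add: L2_inner_add_left L2_inner_add_right L2_add L2_scaleR
        L2_inner_scaleR_left L2_inner_scaleR_right algebra_simps)
  also have "\<dots> = L2_inner S u u + 2 * t * L2_inner S u v"
    using null by (simp add: L2_inner_commute[of S v u])
  also have "\<dots> = -1" using uv unfolding t_def by (simp add: field_simps)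
  finally show False by simp
qed

lemma L2_inner_fspan_eq_0:
  fixes v :: "nat \<Rightarrow> real \<Rightarrow> 'a::euclidean_space"
  assumes "\<forall>i<n. v i \<in> L2 S" "u \<in> L2 S" "\<And>j. j < n \<Longrightarrow> L2_inner S u (v j) = 0"
    and "x \<in> fspan n v"
  shows "L2_inner S u x = 0"
proof -
  obtain c where x: "x = (\<lambda>s. \<Sum>i<n. c i *\<^sub>R v i s)"
    using \<open>x \<in> fspan n v\<close> unfolding fspan_def by blast
  have "L2_inner S u x = (\<Sum>i<n. c i * L2_inner S u (v i))"
    unfolding x by (rule L2_inner_sum_right) (use assms in auto)
  with assms show ?thesis by simp
qed

section \<open>Orthogonal projection onto a finite span\<close>

lemma L2_proj_coeffs_exist:
  fixes v :: "nat \<Rightarrow> real \<Rightarrow> 'a::euclidean_space"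
  assumes "\<forall>i<n. v i \<in> L2 S" "w \<in> L2 S"
  shows "\<exists>c. \<forall>j<n. L2_inner S (\<lambda>x. w x - (\<Sum>i<n. c i *\<^sub>R v i x)) (v j) = 0"
  using assms
proof (induction n arbitrary: w)
  case 0
  show ?case by simp
next
  case (Suc n)
  have vL: "\<And>i. i < Suc n \<Longrightarrow> v i \<in> L2 S" using Suc.prems by auto
  obtain c where c: "\<forall>j<n. L2_inner S (\<lambda>x. w x - (\<Sum>i<n. c i *\<^sub>R v i x)) (v j) = 0"
    using Suc.IH[of w] Suc.prems by auto
  obtain d where d: "\<forall>j<n. L2_inner S (\<lambda>x. v n x - (\<Sum>i<n. d i *\<^sub>R v i x)) (v j) = 0"
    using Suc.IH[of "v n"] vL by auto
  define q where "q = (\<lambda>x. \<Sum>i<n. d i *\<^sub>R v i x)"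
  define e where "e = (\<lambda>x. w x - (\<Sum>i<n. c i *\<^sub>R v i x))"
  define r where "r = (\<lambda>x. v n x - q x)"
  define \<alpha> where "\<alpha> = (if L2_inner S r r = 0 then 0 else L2_inner S e r / L2_inner S r r)"
  have qL: "q \<in> L2 S" unfolding q_def using vL by (intro L2_sum) auto
  have rL: "r \<in> L2 S" unfolding r_def using vL qL by (intro L2_diff) auto
  have eL: "e \<in> L2 S" unfolding e_def using Suc.prems vL by (intro L2_diff L2_sum) auto
  have e'L: "(\<lambda>x. e x - \<alpha> *\<^sub>R r x) \<in> L2 S" using eL rL by (intro L2_diff L2_scaleR)
  \<comment> \<open>the new residual is \<open>e - \<alpha> r\<close>, where \<open>r\<close> is the part of \<open>v n\<close>
    orthogonal to the earlier \<open>v j\<close>\<close>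
  define c' where "c' i = (if i < n then c i - \<alpha> * d i else \<alpha>)" for i
  have "(\<Sum>i<n. c' i *\<^sub>R v i x) = (\<Sum>i<n. c i *\<^sub>R v i x) - \<alpha> *\<^sub>R q x" for x
  proof -
    have "(\<Sum>i<n. c' i *\<^sub>R v i x) = (\<Sum>i<n. c i *\<^sub>R v i x - \<alpha> *\<^sub>R (d i *\<^sub>R v i x))"
      by (rule sum.cong) (simp_all add: c'_def scaleR_diff_left)
    then show ?thesis by (simp add: q_def sum_subtractf scaleR_sum_right)
  qed
  then have residual: "(\<lambda>x. w x - (\<Sum>i<Suc n. c' i *\<^sub>R v i x)) = (\<lambda>x. e x - \<alpha> *\<^sub>R r x)"
    by (simp add: fun_eq_iff e_def r_def c'_def algebra_simps)
  have e_orth: "L2_inner S e (v j) = 0" and r_orth: "L2_inner S r (v j) = 0" if "j < n" for j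
    using that c d by (simp_all add: e_def r_def q_def)
  have old: "L2_inner S (\<lambda>x. e x - \<alpha> *\<^sub>R r x) (v j) = 0" if "j < n" for j
    using that vL eL rL e_orth r_orth
    by (simp add: L2_inner_diff_left L2_scaleR L2_inner_scaleR_left)
  have "L2_inner S (\<lambda>x. e x - \<alpha> *\<^sub>R r x) r = L2_inner S e r - \<alpha> * L2_inner S r r"
    using eL rL by (simp add: L2_inner_diff_left L2_scaleR L2_inner_scaleR_left)
  also have "\<dots> = 0"
    using L2_inner_null_right[OF eL rL] by (auto simp: \<alpha>_def)
  moreover have "L2_inner S (\<lambda>x. e x - \<alpha> *\<^sub>R r x) q = 0"
    unfolding q_def using e'L vL old by (subst L2_inner_sum_right) auto
  ultimately have "L2_inner S (\<lambda>x. e x - \<alpha> *\<^sub>R r x) (\<lambda>x. r x + q x) = 0"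
    using e'L rL qL by (simp add: L2_inner_add_right)
  then have "L2_inner S (\<lambda>x. e x - \<alpha> *\<^sub>R r x) (v n) = 0"
    by (simp add: r_def)
  with old have "\<forall>j<Suc n. L2_inner S (\<lambda>x. e x - \<alpha> *\<^sub>R r x) (v j) = 0"
    using less_Suc_eq by auto
  then show ?case unfolding residual[symmetric] by blast
qed

lemma L2_proj_fspan:
  fixes v :: "nat \<Rightarrow> real \<Rightarrow> 'a::euclidean_space"
  assumes vL: "\<forall>i<n. v i \<in> L2 S" and wL: "w \<in> L2 S"
  shows "L2_proj S (fspan n v) w \<in> fspan n v"
    and "\<And>x. x \<in> fspan n v \<Longrightarrow> L2_inner S (\<lambda>s. w s - L2_proj S (fspan n v) w s) x = 0"
proof -
  obtain c where c: "\<forall>j<n. L2_inner S (\<lambda>x. w x - (\<Sum>i<n. c i *\<^sub>R v i x)) (v j) = 0"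
    using L2_proj_coeffs_exist[OF vL wL] by blast
  define p where "p = (\<lambda>x. \<Sum>i<n. c i *\<^sub>R v i x)"
  have "p \<in> fspan n v" unfolding p_def fspan_def by blast
  moreover have "(\<lambda>s. w s - p s) \<in> L2 S"
    using wL vL unfolding p_def by (intro L2_diff L2_sum) auto
  ultimately have "\<exists>p. p \<in> fspan n v \<and> (\<forall>x\<in>fspan n v. L2_inner S (\<lambda>s. w s - p s) x = 0)"
    using c vL by (auto simp: p_def intro: L2_inner_fspan_eq_0)
  then have "L2_proj S (fspan n v) w \<in> fspan n v \<and>
      (\<forall>x\<in>fspan n v. L2_inner S (\<lambda>s. w s - L2_proj S (fspan n v) w s) x = 0)"
    unfolding L2_proj_def by (rule someI_ex)
  then show "L2_proj S (fspan n v) w \<in> fspan n v"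
    and "\<And>x. x \<in> fspan n v \<Longrightarrow> L2_inner S (\<lambda>s. w s - L2_proj S (fspan n v) w s) x = 0"
    by auto
qed

lemma L2_proj_pythagoras:
  fixes v :: "nat \<Rightarrow> real \<Rightarrow> 'a::euclidean_space"
  assumes vL: "\<forall>i<n. v i \<in> L2 S" and wL: "w \<in> L2 S" and p: "p = L2_proj S (fspan n v) w"
  shows "L2_inner S (\<lambda>s. w s - p s) (\<lambda>s. w s - p s) = L2_inner S w w - L2_inner S p p"
proof -
  have pL: "p \<in> L2 S" using L2_proj_fspan(1)[OF vL wL] fspan_subset_L2[OF vL] p by auto
  have rL: "(\<lambda>s. w s - p s) \<in> L2 S" using wL pL by (rule L2_diff)
  have "L2_inner S (\<lambda>s. w s - p s) p = 0" using L2_proj_fspan[OF vL wL] p by auto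
  then have "L2_inner S w p = L2_inner S p p" using wL pL by (simp add: L2_inner_diff_left)
  moreover have "L2_inner S p (\<lambda>s. w s - p s) = 0"
    using \<open>L2_inner S (\<lambda>s. w s - p s) p = 0\<close> by (simp add: L2_inner_commute)
  ultimately show ?thesis
    using wL pL rL by (simp add: L2_inner_diff_left L2_inner_diff_right)
qed

text \<open>If \<open>w\<close> is orthogonal to \<open>fspan n v\<close>, its projection is orthogonal to itself, hence null.\<close>

lemma L2_proj_residual_of_orthogonal:
  fixes v :: "nat \<Rightarrow> real \<Rightarrow> 'a::euclidean_space"
  assumes vL: "\<forall>i<n. v i \<in> L2 S" and wL: "w \<in> L2 S"
    and orth: "\<And>j. j < n \<Longrightarrow> L2_inner S w (v j) = 0" and uL: "u \<in> L2 S"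
  shows "L2_inner S (\<lambda>s. w s - L2_proj S (fspan n v) w s) u = L2_inner S w u"
proof -
  define p where "p = L2_proj S (fspan n v) w"
  have pV: "p \<in> fspan n v" and pL: "p \<in> L2 S"
    using L2_proj_fspan(1)[OF vL wL] fspan_subset_L2[OF vL] by (auto simp: p_def)
  have "L2_inner S (\<lambda>s. w s - p s) p = 0" using L2_proj_fspan(2)[OF vL wL pV] by (simp add: p_def)
  then have "L2_inner S p p = 0"
    using L2_inner_fspan_eq_0[OF vL wL orth pV] wL pL by (simp add: L2_inner_diff_left)
  then have "L2_inner S p u = 0"
    using L2_inner_null_right[OF uL pL] by (simp add: L2_inner_commute[of S p u])
  then show ?thesis using wL pL uL by (simp add: p_def[symmetric] L2_inner_diff_left)
qed

section \<open>Orthonormal families\<close>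

definition L2_orthonormal ::
  "real set \<Rightarrow> 'i set \<Rightarrow> ('i \<Rightarrow> real \<Rightarrow> 'a::euclidean_space) \<Rightarrow> bool" where
  "L2_orthonormal S I f \<longleftrightarrow> (\<forall>i\<in>I. f i \<in> L2 S) \<and>
     (\<forall>i\<in>I. \<forall>j\<in>I. L2_inner S (f i) (f j) = (if i = j then 1 else 0))"

lemma L2_orthonormal_subset: "L2_orthonormal S I f \<Longrightarrow> J \<subseteq> I \<Longrightarrow> L2_orthonormal S J f"
  unfolding L2_orthonormal_def by blast

lemma L2_orthonormal_inner_sum_left:
  assumes f: "L2_orthonormal S I f" and J: "finite J" "J \<subseteq> I" and k: "k \<in> I"
  shows "L2_inner S (\<lambda>x. \<Sum>i\<in>J. a i *\<^sub>R f i x) (f k) = (if k \<in> J then a k else 0)"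
proof -
  have "L2_inner S (\<lambda>x. \<Sum>i\<in>J. a i *\<^sub>R f i x) (f k) = (\<Sum>i\<in>J. a i * L2_inner S (f i) (f k))"
    using f J k unfolding L2_orthonormal_def by (intro L2_inner_sum_left) auto
  also have "\<dots> = (\<Sum>i\<in>J. if i = k then a i else 0)"
    using f J k unfolding L2_orthonormal_def by (intro sum.cong) auto
  finally show ?thesis using J by (simp add: sum.delta')
qed

lemma L2_orthonormal_inner_sums:
  assumes f: "L2_orthonormal S I f" and J: "finite J" "J \<subseteq> I"
  shows "L2_inner S (\<lambda>x. \<Sum>i\<in>J. a i *\<^sub>R f i x) (\<lambda>x. \<Sum>i\<in>J. b i *\<^sub>R f i x)
    = (\<Sum>i\<in>J. a i * b i)"
proof -
  have fL: "\<And>i. i \<in> J \<Longrightarrow> f i \<in> L2 S" using f J unfolding L2_orthonormal_def by auto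
  then have "L2_inner S (\<lambda>x. \<Sum>i\<in>J. a i *\<^sub>R f i x) (\<lambda>x. \<Sum>i\<in>J. b i *\<^sub>R f i x)
      = (\<Sum>k\<in>J. b k * L2_inner S (\<lambda>x. \<Sum>i\<in>J. a i *\<^sub>R f i x) (f k))"
    using J by (intro L2_inner_sum_right L2_sum) auto
  also have "\<dots> = (\<Sum>k\<in>J. a k * b k)"
    using L2_orthonormal_inner_sum_left[OF f J] J by (intro sum.cong) auto
  finally show ?thesis .
qed

lemma L2_orthonormal_bessel:
  assumes f: "L2_orthonormal S I f" and J: "finite J" "J \<subseteq> I" and u: "u \<in> L2 S"
  shows "(\<Sum>i\<in>J. (L2_inner S u (f i))\<^sup>2) \<le> L2_inner S u u"
proof -
  define c where "c i = L2_inner S u (f i)" for i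
  define P where "P = (\<lambda>x. \<Sum>i\<in>J. c i *\<^sub>R f i x)"
  have fL: "\<And>i. i \<in> J \<Longrightarrow> f i \<in> L2 S" using f J unfolding L2_orthonormal_def by auto
  have PL: "P \<in> L2 S" unfolding P_def using J fL by (intro L2_sum) auto
  have PP: "L2_inner S P P = (\<Sum>i\<in>J. (c i)\<^sup>2)"
    unfolding P_def L2_orthonormal_inner_sums[OF f J] by (simp add: power2_eq_square)
  have uP: "L2_inner S u P = (\<Sum>i\<in>J. (c i)\<^sup>2)"
    unfolding P_def using J fL u by (simp add: L2_inner_sum_right c_def power2_eq_square)
  have "0 \<le> L2_inner S (\<lambda>x. u x - P x) (\<lambda>x. u x - P x)" by (rule L2_inner_nonneg)
  also have "\<dots> = L2_inner S u u - (\<Sum>i\<in>J. (c i)\<^sup>2)"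
    using u PL PP uP
    by (simp add: L2_diff L2_inner_diff_left L2_inner_diff_right L2_inner_commute[of S P u])
  finally show ?thesis by (simp add: c_def)
qed

lemma L2_orthonormal_fspan_dim_eq:
  assumes f: "L2_orthonormal S {..<n} f"
  shows "L2_subspace_dim_eq S n (fspan n f)"
  unfolding L2_subspace_dim_eq_def
proof (intro exI[of _ f] conjI)
  show "\<forall>i<n. f i \<in> L2 S" using f unfolding L2_orthonormal_def by auto
  show "\<forall>c. L2_norm S (\<lambda>x. \<Sum>i<n. c i *\<^sub>R f i x) = 0 \<longrightarrow> (\<forall>i<n. c i = 0)"
  proof (intro allI impI)
    fix c i
    assume "L2_norm S (\<lambda>x. \<Sum>i<n. c i *\<^sub>R f i x) = 0" and i: "i < n"
    then have "(\<Sum>i<n. c i * c i) = 0"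
      using L2_orthonormal_inner_sums[OF f, of "{..<n}" c c] L2_inner_nonneg unfolding L2_norm_def
      by simp
    then show "c i = 0" using i by (simp add: sum_nonneg_eq_0_iff)
  qed
qed simp

text \<open>Eliminate an unknown with a nonzero coefficient in the last equation and recurse.\<close>

lemma homogeneous_system_nontrivial_solution:
  fixes M :: "nat \<Rightarrow> 'k \<Rightarrow> real"
  assumes "finite K" "n < card K"
  shows "\<exists>c. (\<exists>k\<in>K. c k \<noteq> 0) \<and> (\<forall>j<n. (\<Sum>k\<in>K. M j k * c k) = 0)"
  using assms
proof (induction n arbitrary: K M)
  case 0
  then obtain k0 where "k0 \<in> K" by fastforce
  then show ?case by (intro exI[of _ "\<lambda>k. if k = k0 then 1 else 0"]) auto
next
  case (Suc n)
  show ?case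
  proof (cases "\<forall>k\<in>K. M n k = 0")
    case True
    obtain c where "\<exists>k\<in>K. c k \<noteq> 0" "\<forall>j<n. (\<Sum>k\<in>K. M j k * c k) = 0"
      using Suc.IH[of K M] Suc.prems by auto
    with True show ?thesis by (intro exI[of _ c]) (auto simp: less_Suc_eq)
  next
    case False
    then obtain k0 where k0: "k0 \<in> K" "M n k0 \<noteq> 0" by auto
    define K' where "K' = K - {k0}"
    have "finite K'" "n < card K'" using Suc.prems k0 by (auto simp: K'_def)
    from Suc.IH[OF this, of "\<lambda>j k. M j k - M j k0 / M n k0 * M n k"]
    obtain c' where c': "\<exists>k\<in>K'. c' k \<noteq> 0"
      "\<forall>j<n. (\<Sum>k\<in>K'. (M j k - M j k0 / M n k0 * M n k) * c' k) = 0"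
      by blast
    define c where "c = c'(k0 := - (\<Sum>k\<in>K'. M n k * c' k) / M n k0)"
    have split: "(\<Sum>k\<in>K. M j k * c k)
        = (\<Sum>k\<in>K'. M j k * c' k) - M j k0 / M n k0 * (\<Sum>k\<in>K'. M n k * c' k)" for j
    proof -
      have "(\<Sum>k\<in>K. M j k * c k) = M j k0 * c k0 + (\<Sum>k\<in>K'. M j k * c k)"
        unfolding K'_def using Suc.prems k0 by (simp add: sum.remove)
      also have "(\<Sum>k\<in>K'. M j k * c k) = (\<Sum>k\<in>K'. M j k * c' k)"
        by (rule sum.cong) (auto simp: c_def K'_def)
      finally show ?thesis by (simp add: c_def)
    qed
    have "(\<Sum>k\<in>K. M j k * c k) = 0" if "j < Suc n" for j
    proof (cases "j < n")
      case True
      have "(\<Sum>k\<in>K'. (M j k - M j k0 / M n k0 * M n k) * c' k)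
          = (\<Sum>k\<in>K'. M j k * c' k) - M j k0 / M n k0 * (\<Sum>k\<in>K'. M n k * c' k)"
        by (simp add: left_diff_distrib sum_subtractf sum_distrib_left mult.assoc)
      then show ?thesis using c'(2) True unfolding split by simp
    next
      case False
      with that have "j = n" by simp
      with k0 show ?thesis unfolding split by simp
    qed
    moreover have "\<exists>k\<in>K. c k \<noteq> 0" using c' by (auto simp: c_def K'_def)
    ultimately show ?thesis by blast
  qed
qed

lemma L2_orthonormal_unit_combination_orthogonal:
  assumes f: "L2_orthonormal S I f" and K: "finite K" "K \<subseteq> I" "n < card K"
    and vL: "\<forall>j<n. v j \<in> L2 S"
  obtains a where "(\<Sum>k\<in>K. (a k)\<^sup>2) = 1"
    and "\<And>j. j < n \<Longrightarrow> L2_inner S (\<lambda>x. \<Sum>k\<in>K. a k *\<^sub>R f k x) (v j) = 0"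
proof -
  obtain c where c: "\<exists>k\<in>K. c k \<noteq> 0"
    and csol: "\<forall>j<n. (\<Sum>k\<in>K. L2_inner S (f k) (v j) * c k) = 0"
    using homogeneous_system_nontrivial_solution[OF K(1,3), of "\<lambda>j k. L2_inner S (f k) (v j)"]
    by blast
  obtain k0 where k0: "k0 \<in> K" "c k0 \<noteq> 0" using c by blast
  define s where "s = (\<Sum>k\<in>K. (c k)\<^sup>2)"
  have "0 < s" unfolding s_def using k0 K(1) by (intro sum_pos2[of K k0]) auto
  define a where "a k = c k / sqrt s" for k
  have "(\<Sum>k\<in>K. (a k)\<^sup>2) = (\<Sum>k\<in>K. (c k)\<^sup>2) / s"
    using \<open>0 < s\<close> by (simp add: a_def power_divide sum_divide_distrib)
  then have "(\<Sum>k\<in>K. (a k)\<^sup>2) = 1"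
    using \<open>0 < s\<close> by (simp add: s_def)
  moreover have "L2_inner S (\<lambda>x. \<Sum>k\<in>K. a k *\<^sub>R f k x) (v j) = 0" if "j < n" for j
  proof -
    have "L2_inner S (\<lambda>x. \<Sum>k\<in>K. a k *\<^sub>R f k x) (v j) = (\<Sum>k\<in>K. a k * L2_inner S (f k) (v j))"
      using f K vL that unfolding L2_orthonormal_def by (intro L2_inner_sum_left) auto
    also have "\<dots> = (\<Sum>k\<in>K. L2_inner S (f k) (v j) * c k) / sqrt s"
      by (simp add: a_def sum_divide_distrib mult.commute[of "c _"])
    finally show ?thesis using csol that by simp
  qed
  ultimately show ?thesis by (rule that)
qed

section \<open>Optimal subspaces for an operator with a finite singular value decomposition\<close>

abbreviation L2_unit_ball :: "real set \<Rightarrow> (real \<Rightarrow> 'a::euclidean_space) set" where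
  "L2_unit_ball S \<equiv> {w \<in> L2 S. L2_norm S w \<le> 1}"

locale L2_svd =
  fixes S T :: "real set"
    and Op :: "(real \<Rightarrow> 'a::euclidean_space) \<Rightarrow> real \<Rightarrow> 'b::euclidean_space"
    and N :: nat and \<sigma> :: "nat \<Rightarrow> real"
    and f :: "nat \<Rightarrow> real \<Rightarrow> 'a" and g :: "nat \<Rightarrow> real \<Rightarrow> 'b"
  assumes T_sets: "T \<in> sets lborel"
    and f_orthonormal: "L2_orthonormal S {..<N} f"
    and g_orthonormal: "L2_orthonormal T {..<N} g"
    and \<sigma>_antimono: "\<And>i j. i \<le> j \<Longrightarrow> j < N \<Longrightarrow> \<sigma> j \<le> \<sigma> i"
    and \<sigma>_nonneg: "\<And>i. i < N \<Longrightarrow> 0 \<le> \<sigma> i"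
    and Op_measurable: "\<And>u. u \<in> L2 S \<Longrightarrow> Op u \<in> borel_measurable lborel"
    and Op_svd: "\<And>u. u \<in> L2 S \<Longrightarrow>
      AE t in lborel. t \<in> T \<longrightarrow> Op u t = (\<Sum>i<N. (\<sigma> i * L2_inner S u (f i)) *\<^sub>R g i t)"
begin

definition singular_value :: "nat \<Rightarrow> real" where
  "singular_value k = (if k < N then \<sigma> k else 0)"

abbreviation proj_err :: "(real \<Rightarrow> 'a) set \<Rightarrow> (real \<Rightarrow> 'a) \<Rightarrow> real" where
  "proj_err V w \<equiv> L2_norm T (\<lambda>t. Op w t - Op (L2_proj S V w) t)"

lemma f_L2: "i < N \<Longrightarrow> f i \<in> L2 S"
  using f_orthonormal unfolding L2_orthonormal_def by auto

lemma singular_value_nonneg: "0 \<le> singular_value k"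
  by (simp add: singular_value_def \<sigma>_nonneg)

lemma Op_diff_norm:
  assumes wL: "w \<in> L2 S" and pL: "p \<in> L2 S"
  shows "L2_norm T (\<lambda>t. Op w t - Op p t)
      = sqrt (\<Sum>i<N. (\<sigma> i * L2_inner S (\<lambda>s. w s - p s) (f i))\<^sup>2)"
proof -
  define d where "d i = \<sigma> i * L2_inner S (\<lambda>s. w s - p s) (f i)" for i
  define G where "G = (\<lambda>t. \<Sum>i<N. d i *\<^sub>R g i t)"
  have d_diff: "d i = \<sigma> i * L2_inner S w (f i) - \<sigma> i * L2_inner S p (f i)" if "i < N" for i
    using wL pL f_L2[OF that] by (simp add: d_def L2_inner_diff_left right_diff_distrib)
  have G: "(\<Sum>i<N. (\<sigma> i * L2_inner S w (f i)) *\<^sub>R g i t)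
      - (\<Sum>i<N. (\<sigma> i * L2_inner S p (f i)) *\<^sub>R g i t) = G t" for t
    unfolding G_def sum_subtractf[symmetric]
    by (rule sum.cong) (simp_all add: d_diff scaleR_diff_left)
  have "AE t in lborel. t \<in> T \<longrightarrow> Op w t - Op p t = G t"
    using Op_svd[OF wL] Op_svd[OF pL] by eventually_elim (auto simp: G)
  then have AE: "AE t in lborel. indicator T t *\<^sub>R inner (Op w t - Op p t) (Op w t - Op p t)
      = indicator T t *\<^sub>R inner (G t) (G t)"
    by eventually_elim (simp add: indicator_def)
  note T_sets[measurable] Op_measurable[OF wL, measurable] Op_measurable[OF pL, measurable]
  have "(\<lambda>t. indicator T t *\<^sub>R inner (Op w t - Op p t) (Op w t - Op p t)) \<in> borel_measurable lborel"
    by measurable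
  moreover have "G \<in> L2 T"
    unfolding G_def using g_orthonormal unfolding L2_orthonormal_def by (intro L2_sum) auto
  then have "(\<lambda>t. indicator T t *\<^sub>R inner (G t) (G t)) \<in> borel_measurable lborel"
    using L2_inner_integrable unfolding set_integrable_def by blast
  ultimately have "L2_inner T (\<lambda>t. Op w t - Op p t) (\<lambda>t. Op w t - Op p t) = L2_inner T G G"
    unfolding L2_inner_def set_lebesgue_integral_def using AE by (rule integral_cong_AE)
  also have "\<dots> = (\<Sum>i<N. d i * d i)"
    unfolding G_def by (rule L2_orthonormal_inner_sums[OF g_orthonormal]) auto
  finally show ?thesis unfolding L2_norm_def d_def by (simp add: power2_eq_square)
qed

lemma proj_err_eq:
  fixes v :: "nat \<Rightarrow> real \<Rightarrow> 'a"
  assumes vL: "\<forall>i<n. v i \<in> L2 S" and wL: "w \<in> L2 S" and p: "p = L2_proj S (fspan n v) w"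
  shows "proj_err (fspan n v) w = sqrt (\<Sum>i<N. (\<sigma> i * L2_inner S (\<lambda>s. w s - p s) (f i))\<^sup>2)"
  using L2_proj_fspan(1)[OF vL wL] fspan_subset_L2[OF vL] p
  by (auto intro!: Op_diff_norm wL)

lemma proj_residual_norm_le:
  fixes v :: "nat \<Rightarrow> real \<Rightarrow> 'a"
  assumes vL: "\<forall>i<n. v i \<in> L2 S" and w: "w \<in> L2_unit_ball S" and p: "p = L2_proj S (fspan n v) w"
  shows "L2_inner S (\<lambda>s. w s - p s) (\<lambda>s. w s - p s) \<le> 1"
  using L2_proj_pythagoras[OF vL _ p] L2_inner_nonneg[of S p] w
  by (simp add: L2_norm_def)

lemma proj_err_bdd_above:
  fixes v :: "nat \<Rightarrow> real \<Rightarrow> 'a"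
  assumes vL: "\<forall>i<n. v i \<in> L2 S"
  shows "bdd_above (proj_err (fspan n v) ` L2_unit_ball S)"
proof (rule bdd_aboveI2)
  fix w :: "real \<Rightarrow> 'a" assume w: "w \<in> L2_unit_ball S"
  define p where "p = L2_proj S (fspan n v) w"
  have rL: "(\<lambda>s. w s - p s) \<in> L2 S"
    using L2_proj_fspan(1)[OF vL] fspan_subset_L2[OF vL] w by (auto simp: p_def intro: L2_diff)
  have "(\<sigma> i * L2_inner S (\<lambda>s. w s - p s) (f i))\<^sup>2 \<le> (\<sigma> i)\<^sup>2" if "i < N" for i
  proof -
    have "(\<Sum>j\<in>{i}. (L2_inner S (\<lambda>s. w s - p s) (f j))\<^sup>2) \<le> 1"
      using L2_orthonormal_bessel[OF f_orthonormal _ _ rL, of "{i}"]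
        proj_residual_norm_le[OF vL w p_def] that by simp
    then show ?thesis
      by (simp add: power_mult_distrib mult_left_le)
  qed
  then have "(\<Sum>i<N. (\<sigma> i * L2_inner S (\<lambda>s. w s - p s) (f i))\<^sup>2) \<le> (\<Sum>i<N. (\<sigma> i)\<^sup>2)"
    by (intro sum_mono) auto
  then show "proj_err (fspan n v) w \<le> sqrt (\<Sum>i<N. (\<sigma> i)\<^sup>2)"
    using proj_err_eq[OF vL _ p_def] w by simp
qed

lemma exists_unit_proj_err_ge:
  fixes v :: "nat \<Rightarrow> real \<Rightarrow> 'a"
  assumes vL: "\<forall>i<n. v i \<in> L2 S" and n: "n < N"
  shows "\<exists>w\<in>L2_unit_ball S. \<sigma> n \<le> proj_err (fspan n v) w"
proof -
  define K where "K = {..<Suc n}"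
  have K: "finite K" "K \<subseteq> {..<N}" "n < card K" using n by (auto simp: K_def)
  obtain a where a: "(\<Sum>k\<in>K. (a k)\<^sup>2) = 1"
    and a_orth: "\<And>j. j < n \<Longrightarrow> L2_inner S (\<lambda>x. \<Sum>k\<in>K. a k *\<^sub>R f k x) (v j) = 0"
    using L2_orthonormal_unit_combination_orthogonal[OF f_orthonormal K vL] by blast
  define w where "w = (\<lambda>x. \<Sum>k\<in>K. a k *\<^sub>R f k x)"
  define p where "p = L2_proj S (fspan n v) w"
  have wL: "w \<in> L2 S" unfolding w_def using K f_L2 by (intro L2_sum) auto
  have "L2_inner S w w = 1"
    using a L2_orthonormal_inner_sums[OF f_orthonormal K(1,2)] by (simp add: w_def power2_eq_square)
  then have "w \<in> L2_unit_ball S" using wL by (simp add: L2_norm_def)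
  have coeff: "L2_inner S (\<lambda>s. w s - p s) (f k) = a k" if "k \<in> K" for k
    using L2_proj_residual_of_orthogonal[OF vL wL, of "f k"] a_orth f_L2 K that
      L2_orthonormal_inner_sum_left[OF f_orthonormal K(1,2), of k a]
    by (auto simp: p_def w_def)
  have "(\<sigma> n)\<^sup>2 = (\<Sum>k\<in>K. (\<sigma> n)\<^sup>2 * (a k)\<^sup>2)" by (simp add: a sum_distrib_left[symmetric])
  also have "\<dots> \<le> (\<Sum>k\<in>K. (\<sigma> k * a k)\<^sup>2)"
  proof (rule sum_mono)
    fix k assume "k \<in> K"
    then have "\<sigma> n \<le> \<sigma> k" using n \<sigma>_antimono by (auto simp: K_def)
    then have "(\<sigma> n)\<^sup>2 \<le> (\<sigma> k)\<^sup>2" using \<sigma>_nonneg n by (intro power_mono) auto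
    then show "(\<sigma> n)\<^sup>2 * (a k)\<^sup>2 \<le> (\<sigma> k * a k)\<^sup>2"
      unfolding power_mult_distrib by (rule mult_right_mono) simp
  qed
  also have "\<dots> = (\<Sum>k\<in>K. (\<sigma> k * L2_inner S (\<lambda>s. w s - p s) (f k))\<^sup>2)"
    using coeff by simp
  also have "\<dots> \<le> (\<Sum>k<N. (\<sigma> k * L2_inner S (\<lambda>s. w s - p s) (f k))\<^sup>2)"
    using K by (intro sum_mono2) auto
  finally have "\<sigma> n \<le> proj_err (fspan n v) w"
    using proj_err_eq[OF vL wL p_def] \<sigma>_nonneg[OF n] by (simp add: real_le_rsqrt)
  with \<open>w \<in> L2_unit_ball S\<close> show ?thesis by blast
qed

lemma singular_value_le_worst_err:
  fixes v :: "nat \<Rightarrow> real \<Rightarrow> 'a"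
  assumes vL: "\<forall>i<n. v i \<in> L2 S"
  shows "singular_value n \<le> worst_err S T Op (L2_unit_ball S) (fspan n v)"
proof -
  have "\<exists>w\<in>L2_unit_ball S. singular_value n \<le> proj_err (fspan n v) w"
  proof (cases "n < N")
    case False
    have "(\<lambda>x. 0) \<in> L2_unit_ball S" by (simp add: L2_zero L2_norm_def L2_inner_def)
    with False show ?thesis by (auto simp: singular_value_def L2_norm_def L2_inner_nonneg)
  qed (use exists_unit_proj_err_ge[OF vL] in \<open>auto simp: singular_value_def\<close>)
  then show ?thesis
    unfolding worst_err_def using proj_err_bdd_above[OF vL] by (auto intro: cSUP_upper2)
qed

lemma proj_err_fspan_le:
  assumes n: "n \<le> N" and w: "w \<in> L2_unit_ball S"
  shows "proj_err (fspan n f) w \<le> singular_value n"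
proof -
  have fL: "\<forall>i<n. f i \<in> L2 S" using n f_L2 by auto
  define p where "p = L2_proj S (fspan n f) w"
  define r where "r = (\<lambda>s. w s - p s)"
  have rL: "r \<in> L2 S"
    using L2_proj_fspan(1)[OF fL] fspan_subset_L2[OF fL] w by (auto simp: r_def p_def intro: L2_diff)
  have r_orth: "L2_inner S r (f k) = 0" if "k < n" for k
    using L2_proj_fspan(2)[OF fL _ fspan_member[OF that]] w by (simp add: r_def p_def)
  \<comment> \<open>the residual has no components along \<open>f k\<close> for \<open>k < n\<close>,
    and \<open>\<sigma> k \<le> \<sigma> n\<close> for the others\<close>
  have "(\<Sum>k<N. (\<sigma> k * L2_inner S r (f k))\<^sup>2)
      \<le> (\<Sum>k<N. (singular_value n)\<^sup>2 * (L2_inner S r (f k))\<^sup>2)"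
  proof (rule sum_mono)
    fix k assume k: "k \<in> {..<N}"
    show "(\<sigma> k * L2_inner S r (f k))\<^sup>2 \<le> (singular_value n)\<^sup>2 * (L2_inner S r (f k))\<^sup>2"
    proof (cases "k < n")
      case False
      then have "\<sigma> k \<le> singular_value n" using k n \<sigma>_antimono by (auto simp: singular_value_def)
      then have "(\<sigma> k)\<^sup>2 \<le> (singular_value n)\<^sup>2" using \<sigma>_nonneg k by (intro power_mono) auto
      then show ?thesis by (simp add: power_mult_distrib mult_right_mono)
    qed (simp add: r_orth)
  qed
  also have "\<dots> \<le> (singular_value n)\<^sup>2 * L2_inner S r r"
    by (simp add: sum_distrib_left[symmetric] mult_left_mono L2_orthonormal_bessel[OF f_orthonormal _ _ rL])
  also have "\<dots> \<le> (singular_value n)\<^sup>2"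
    using proj_residual_norm_le[OF fL w p_def] by (simp add: r_def mult_left_le)
  finally show ?thesis
    using proj_err_eq[OF fL _ p_def] w singular_value_nonneg
    by (simp add: r_def real_sqrt_le_iff real_le_lsqrt)
qed

lemma worst_err_fspan:
  assumes "n \<le> N"
  shows "worst_err S T Op (L2_unit_ball S) (fspan n f) = singular_value n"
proof (rule antisym)
  have "(\<lambda>x. 0) \<in> L2_unit_ball S" by (simp add: L2_zero L2_norm_def L2_inner_def)
  then show "worst_err S T Op (L2_unit_ball S) (fspan n f) \<le> singular_value n"
    unfolding worst_err_def using proj_err_fspan_le[OF assms] by (intro cSUP_least) auto
  show "singular_value n \<le> worst_err S T Op (L2_unit_ball S) (fspan n f)"
    using assms f_L2 by (intro singular_value_le_worst_err) auto
qed

lemma optimal_err_eq: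
  assumes "n \<le> N"
  shows "optimal_err S T Op (L2_unit_ball S) n = singular_value n"
proof -
  have lower: "singular_value n \<le> worst_err S T Op (L2_unit_ball S) V"
    if "L2_subspace_dim_le S n V" for V
    using that singular_value_le_worst_err unfolding L2_subspace_dim_le_def by blast
  have fspan: "L2_subspace_dim_le S n (fspan n f)"
    using assms f_L2 unfolding L2_subspace_dim_le_def by (auto intro!: exI[of _ f])
  show ?thesis
    unfolding optimal_err_def
  proof (rule antisym)
    show "(INF V\<in>{V. L2_subspace_dim_le S n V}. worst_err S T Op (L2_unit_ball S) V) \<le> singular_value n"
      using fspan lower worst_err_fspan[OF assms] by (intro cINF_lower2[where x="fspan n f"] bdd_belowI2) auto
    show "singular_value n \<le> (INF V\<in>{V. L2_subspace_dim_le S n V}. worst_err S T Op (L2_unit_ball S) V)"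
      using fspan lower by (intro cINF_greatest) auto
  qed
qed

theorem active_subspace_fspan:
  assumes "n \<le> N"
  shows "active_subspace S T Op (L2_unit_ball S) n (fspan n f)"
  unfolding active_subspace_def
  using L2_orthonormal_fspan_dim_eq[OF L2_orthonormal_subset[OF f_orthonormal]] assms
    worst_err_fspan optimal_err_eq by auto

end

section \<open>The Hankel operator\<close>

lemma matpow_scaleR: "matpow (c *\<^sub>R A) k = c ^ k *\<^sub>R matpow A k"
  by (induction k) (simp_all add: matrix_scalar_ac scalar_matrix_assoc mult.commute)

lemma mat_exp_scaleR: "mat_exp (t *\<^sub>R A) = (\<Sum>k. (t ^ k / fact k) *\<^sub>R matpow A k)"
  unfolding mat_exp_def matpow_scaleR by simp

lemma measurable_vec_nth [measurable (raw)]: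
  fixes h :: "'b \<Rightarrow> 'a::euclidean_space ^ 'n"
  assumes "h \<in> borel_measurable M"
  shows "(\<lambda>x. h x $ i) \<in> borel_measurable M"
proof -
  have "(\<lambda>x. h x \<bullet> axis i b) \<in> borel_measurable M" for b
    using assms by measurable
  then show ?thesis
    by (subst borel_measurable_euclidean_space) (simp add: inner_axis)
qed

lemma measurable_vec_lambda:
  fixes h :: "'n::finite \<Rightarrow> 'b \<Rightarrow> real"
  assumes "\<And>i. h i \<in> borel_measurable M"
  shows "(\<lambda>x. \<chi> i. h i x) \<in> borel_measurable M"
proof (subst borel_measurable_euclidean_space, intro ballI)
  fix b :: "real^'n" assume "b \<in> Basis"
  then obtain i u where b: "b = axis i u" "u \<in> (Basis :: real set)" by (auto simp: Basis_vec_def)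
  have "(\<lambda>x. h i x * u) \<in> borel_measurable M" using assms by measurable
  then show "(\<lambda>x. (\<chi> i. h i x) \<bullet> b) \<in> borel_measurable M"
    using b by (simp add: inner_axis)
qed

lemma measurable_matrix_vector_mult [measurable (raw)]:
  fixes X :: "'b \<Rightarrow> real^'n^'m" and v :: "'b \<Rightarrow> real^'n"
  assumes "X \<in> borel_measurable M" "v \<in> borel_measurable M"
  shows "(\<lambda>x. X x *v v x) \<in> borel_measurable M"
  unfolding matrix_vector_mult_def
  by (rule measurable_vec_lambda) (use assms in measurable)

lemma measurable_mat_exp_scaleR [measurable (raw)]:
  fixes A :: "real^'n^'n"
  assumes "h \<in> borel_measurable M"
  shows "(\<lambda>x. mat_exp (h x *\<^sub>R A)) \<in> borel_measurable M"
  unfolding mat_exp_scaleR using assms by measurable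

lemma hankel_borel_measurable:
  assumes "set_borel_measurable lborel {..0} u"
  shows "hankel A B C u \<in> borel_measurable lborel"
proof -
  define U where "U = (\<lambda>s. indicator {..0::real} s *\<^sub>R u s)"
  have [measurable]: "U \<in> borel_measurable lborel"
    using assms unfolding U_def set_borel_measurable_def .
  have "(\<lambda>(t, s). C *v (mat_exp ((t - s) *\<^sub>R A) *v (B *v U s)))
      \<in> borel_measurable (lborel \<Otimes>\<^sub>M lborel)"
    by measurable
  then have "(\<lambda>t. \<integral>s. C *v (mat_exp ((t - s) *\<^sub>R A) *v (B *v U s)) \<partial>lborel) \<in> borel_measurable lborel"
    by (rule lborel.borel_measurable_lebesgue_integral[where f="\<lambda>t s. C *v (mat_exp ((t - s) *\<^sub>R A) *v (B *v U s))"])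
  then show ?thesis
    unfolding hankel_def set_lebesgue_integral_def U_def by (simp add: matrix_vector_mult_scaleR)
qed

theorem theorem4p1:
  fixes A :: "real^'N^'N" and B :: "real^'m^'N" and C :: "real^'N^'p" and D :: "real^'m^'p"
    and \<sigma> :: "nat \<Rightarrow> real"
    and f :: "nat \<Rightarrow> real \<Rightarrow> real^'m" and g :: "nat \<Rightarrow> real \<Rightarrow> real^'p"
    and n :: nat
  assumes stable: "\<And>l. complex_eigenvalue A l \<Longrightarrow> Re l < 0"
    and f_L2: "\<And>i. i \<in> {1..CARD('N)} \<Longrightarrow> f i \<in> L2 {..0}"
    and g_L2: "\<And>i. i \<in> {1..CARD('N)} \<Longrightarrow> g i \<in> L2 {0<..}"
    and f_on: "\<And>i j. i \<in> {1..CARD('N)} \<Longrightarrow> j \<in> {1..CARD('N)} \<Longrightarrow>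
                 L2_inner {..0} (f i) (f j) = (if i = j then 1 else 0)"
    and g_on: "\<And>i j. i \<in> {1..CARD('N)} \<Longrightarrow> j \<in> {1..CARD('N)} \<Longrightarrow>
                 L2_inner {0<..} (g i) (g j) = (if i = j then 1 else 0)"
    and \<sigma>_mono: "\<And>i j. 1 \<le> i \<Longrightarrow> i \<le> j \<Longrightarrow> j \<le> CARD('N) \<Longrightarrow> \<sigma> j \<le> \<sigma> i"
    and \<sigma>_nonneg: "\<And>i. i \<in> {1..CARD('N)} \<Longrightarrow> 0 \<le> \<sigma> i"
    and svd: "\<And>u. u \<in> L2 {..0} \<Longrightarrow>
                AE t in lborel. t > 0 \<longrightarrow>
                  hankel A B C u t = (\<Sum>i=1..CARD('N). (\<sigma> i * L2_inner {..0} u (f i)) *\<^sub>R g i t)"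
    and n: "n \<in> {1..CARD('N)}"
  shows "active_subspace {..0} {0<..} (hankel A B C) {w \<in> L2 {..0}. L2_norm {..0} w \<le> 1} n
           (fspan n (\<lambda>i. f (Suc i)))
       \<and> worst_err {..0} {0<..} (hankel A B C) {w \<in> L2 {..0}. L2_norm {..0} w \<le> 1}
           (fspan n (\<lambda>i. f (Suc i)))
         = optimal_err {..0} {0<..} (hankel A B C) {w \<in> L2 {..0}. L2_norm {..0} w \<le> 1} n
       \<and> optimal_err {..0} {0<..} (hankel A B C) {w \<in> L2 {..0}. L2_norm {..0} w \<le> 1} n
         = (if n < CARD('N) then \<sigma> (Suc n) else 0)"
proof -
  \<comment> \<open>the stability of \<open>A\<close> is only needed for the existence of the assumed
    singular value decomposition\<close>
  interpret L2_svd "{..0}" "{0<..}" "hankel A B C" "CARD('N)" "\<lambda>i. \<sigma> (Suc i)"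
    "\<lambda>i. f (Suc i)" "\<lambda>i. g (Suc i)"
  proof
    show "{0::real<..} \<in> sets lborel" by simp
    show "L2_orthonormal {..0} {..<CARD('N)} (\<lambda>i. f (Suc i))"
      using f_L2 f_on by (auto simp: L2_orthonormal_def)
    show "L2_orthonormal {0<..} {..<CARD('N)} (\<lambda>i. g (Suc i))"
      using g_L2 g_on by (auto simp: L2_orthonormal_def)
    show "hankel A B C u \<in> borel_measurable lborel" if "u \<in> L2 {..0}" for u
      using that by (intro hankel_borel_measurable) (simp add: L2_def)
    show "AE t in lborel. t \<in> {0<..} \<longrightarrow> hankel A B C u t =
        (\<Sum>i<CARD('N). (\<sigma> (Suc i) * L2_inner {..0} u (f (Suc i))) *\<^sub>R g (Suc i) t)"
      if "u \<in> L2 {..0}" for u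
      using svd[OF that] by eventually_elim (simp add: sum.atLeast1_atMost_eq)
  qed (use \<sigma>_mono \<sigma>_nonneg in auto)
  show ?thesis
    using active_subspace_fspan worst_err_fspan optimal_err_eq n
    by (simp add: singular_value_def)
qed

end
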